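(* Let $\nu$ be a distribution on $\mathcal{W}$ such that for every $z\in\mathcal{Z}$ the random variable $\ell(W,z)$, $W\sim\nu$, is $\alpha^2$-subgaussian. Then for every $r>0$, \[ \mathsf{D}_3(0,\{\nu\})\ge\mathsf{D}_3(r,\{\nu\})\ge\mathsf{D}_3(0,\{\nu\})-\frac1{\sqrt n}\left[\frac{\alpha\sqrt r}{\sqrt2}+\frac{\alpha}{\sqrt{2r}}(e^r-1)\right]. \] Consequently, for any algorithm $\mathsf{A}$ run on $S'\sim(\mu')^{\otimes n}$ whose output $\mathsf{A}(S')$ has marginal distribution $\nu$ and with $I(S';\mathsf{A}(S'))>0$, \[ \mathrm{gen}(\mu,\mu',\mathsf{A})\ge\mathbb{E}_{W\sim\nu}[L_\mu(W)-L_{\mu'}(W)]-\frac1{\sqrt n}\left[\frac{\alpha\sqrt{I(S';\mathsf{A}(S'))}}{\sqrt2}+\frac{\alpha\,(e^{I(S';\mathsf{A}(S'))}-1)}{\sqrt{2I(S';\mathsf{A}(S'))}}\right]. \]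
   Context: Setup: $\mathcal{Z},\mathcal{W}$ measurable spaces, $\ell:\mathcal{W}\times\mathcal{Z}\to[0,\infty)$ measurable loss, $\mu,\mu'$ distributions on $\mathcal{Z}$, $S'=(Z'_1,\dots,Z'_n)$ i.i.d. $\sim\mu'$, $\mathsf{A}$ a Markov kernel from $\mathcal{Z}^n$ to $\mathcal{W}$, $W'=\mathsf{A}(S')$, $L_\mu(w)=\mathbb{E}_{Z\sim\mu}\ell(w,Z)$, $L_{\mu'}$ likewise, $L_s(w)=\frac1n\sum_i\ell(w,z_i)$, $\mathrm{gen}(\mu,\mu',\mathsf{A})=\mathbb{E}[L_\mu(W')-L_{S'}(W')]$. For a family $\mathcal{M}$ of distributions on $\mathcal{W}$, $\mathsf{D}_3(r,\mathcal{M})=\inf_{\nu\in\mathcal{M}}\inf\{\mathbb{E}_\pi[L_\mu(W')-L_{S'}(W')]:\pi\text{ a coupling of }\nu\text{ and }(\mu')^{\otimes n},\ I_\pi(W';S')\le r\}$; note $\mathsf{D}_3(0,\{\nu\})=\mathbb{E}_{W\sim\nu}[L_\mu(W)-L_{\mu'}(W)]$. A real random variable $X$ is $\alpha^2$-subgaussian if $\mathbb{E}[e^{s(X-\mathbb{E}X)}]\le e^{\alpha^2s^2/2}$ for all real $s$. *)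

theory Defs
  imports "HOL-Probability.Probability"
begin

abbreviation sample_space :: "nat \<Rightarrow> 'z measure \<Rightarrow> (nat \<Rightarrow> 'z) measure" where
  "sample_space n M \<equiv> PiM {..<n} (\<lambda>_. M)"

definition pop_risk :: "('w \<Rightarrow> 'z \<Rightarrow> real) \<Rightarrow> 'z measure \<Rightarrow> 'w \<Rightarrow> real" where
  "pop_risk loss \<mu> w = (\<integral>z. loss w z \<partial>\<mu>)"

definition emp_risk :: "('w \<Rightarrow> 'z \<Rightarrow> real) \<Rightarrow> nat \<Rightarrow> (nat \<Rightarrow> 'z) \<Rightarrow> 'w \<Rightarrow> real" where
  "emp_risk loss n s w = (1 / real n) * (\<Sum>i<n. loss w (s i))"

text \<open>Kullback--Leibler divergence KL(Q || P) in nats, with values in [0, \<infinity>]: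
  infinite unless Q is absolutely continuous w.r.t. P and the log-density is Q-integrable.\<close>
definition KL_nats :: "'a measure \<Rightarrow> 'a measure \<Rightarrow> ereal" where
  "KL_nats P Q = (if sets Q = sets P \<and> absolutely_continuous P Q
                      \<and> integrable Q (entropy_density (exp 1) P Q)
                   then ereal (KL_divergence (exp 1) P Q) else \<infinity>)"

definition mutual_info :: "'w measure \<Rightarrow> 's measure \<Rightarrow> ('w \<times> 's) measure \<Rightarrow> ereal" where
  "mutual_info \<nu> Q \<pi> = KL_nats (\<nu> \<Otimes>\<^sub>M Q) \<pi>"

definition couplings :: "'w measure \<Rightarrow> 'z measure \<Rightarrow> nat \<Rightarrow> 'w measure \<Rightarrow> 'z measure
    \<Rightarrow> ('w \<times> (nat \<Rightarrow> 'z)) measure set" where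
  "couplings MW MZ n \<nu> \<mu>' = {\<pi>. prob_space \<pi> \<and> sets \<pi> = sets (MW \<Otimes>\<^sub>M sample_space n MZ)
      \<and> distr \<pi> MW fst = \<nu> \<and> distr \<pi> (sample_space n MZ) snd = sample_space n \<mu>'}"

definition D3 :: "'w measure \<Rightarrow> 'z measure \<Rightarrow> nat \<Rightarrow> ('w \<Rightarrow> 'z \<Rightarrow> real) \<Rightarrow> 'z measure
    \<Rightarrow> 'z measure \<Rightarrow> real \<Rightarrow> 'w measure \<Rightarrow> ereal" where
  "D3 MW MZ n loss \<mu> \<mu>' r \<nu> =
     (INF \<pi> \<in> {\<pi> \<in> couplings MW MZ n \<nu> \<mu>'. mutual_info \<nu> (sample_space n \<mu>') \<pi> \<le> ereal r}.
        ereal (\<integral>p. pop_risk loss \<mu> (fst p) - emp_risk loss n (snd p) (fst p) \<partial>\<pi>))"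

definition subgaussian :: "'a measure \<Rightarrow> ('a \<Rightarrow> real) \<Rightarrow> real \<Rightarrow> bool" where
  "subgaussian M X \<alpha> \<longleftrightarrow> integrable M X \<and>
     (\<forall>s::real. (\<integral>\<^sup>+x. ennreal (exp (s * (X x - (\<integral>y. X y \<partial>M)))) \<partial>M)
                  \<le> ennreal (exp (\<alpha>\<^sup>2 * s\<^sup>2 / 2)))"

definition joint_law :: "'w measure \<Rightarrow> 'z measure \<Rightarrow> nat \<Rightarrow> 'z measure
    \<Rightarrow> ((nat \<Rightarrow> 'z) \<Rightarrow> 'w measure) \<Rightarrow> ('w \<times> (nat \<Rightarrow> 'z)) measure" where
  "joint_law MW MZ n \<mu>' A =
     sample_space n \<mu>' \<bind> (\<lambda>s. A s \<bind> (\<lambda>w. return (MW \<Otimes>\<^sub>M sample_space n MZ) (w, s)))"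

definition gen :: "'w measure \<Rightarrow> 'z measure \<Rightarrow> nat \<Rightarrow> ('w \<Rightarrow> 'z \<Rightarrow> real) \<Rightarrow> 'z measure
    \<Rightarrow> 'z measure \<Rightarrow> ((nat \<Rightarrow> 'z) \<Rightarrow> 'w measure) \<Rightarrow> real" where
  "gen MW MZ n loss \<mu> \<mu>' A =
     (\<integral>p. pop_risk loss \<mu> (fst p) - emp_risk loss n (snd p) (fst p) \<partial>joint_law MW MZ n \<mu>' A)"

end

theory Submission
  imports Defs
begin

(*
  Fix a coupling pi of nu and mu'^n with I_pi(W;S') <= r. Let m(z) be the nu-mean of
  loss(., z) and c_t(w) the mu'-moment generating function of loss(w, Z) - m(Z) at t.
  Under the product nu x mu'^n the function
    F(w, s) = t * sum_i (loss(w, s_i) - m(s_i)) - n * (c_t(w) - 1)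
  satisfies E[exp F] <= 1, since conditionally on w it equals c^n * exp(-n(c - 1)) <= 1;
  the Donsker-Varadhan change of measure to pi therefore gives E_pi[F] <= r.
  Tonelli and subgaussianity bound E_nu[c_t] by exp(alpha^2 t^2 / 2), whence
    gap(pi) >= E_nu[L_mu - L_mu'] - r/(t n) - (exp(alpha^2 t^2 / 2) - 1)/t,
  and t = sqrt(2r/n)/alpha together with n(e^(r/n) - 1) <= e^r - 1 yields the stated
  penalty (for alpha = 0 let t tend to infinity). The product coupling itself has zero
  mutual information and gap E_nu[L_mu - L_mu'], which bounds D3(0) from above.
*)

lemma power_mult_exp_le_1:
  fixes c :: real
  assumes "0 \<le> c"
  shows "c ^ k * exp (- (real k * (c - 1))) \<le> 1"
proof -
  have "c \<le> exp (c - 1)" using exp_ge_add_one_self[of "c - 1"] by simp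
  then have "c * exp (1 - c) \<le> 1" by (simp add: exp_diff field_simps)
  then have "(c * exp (1 - c)) ^ k \<le> 1" using assms by (simp add: power_le_one)
  then show ?thesis
    by (simp add: power_mult_distrib exp_of_nat_mult[symmetric] algebra_simps)
qed

lemma mult_exp_divide_le:
  assumes "0 < n" "0 \<le> r"
  shows "real n * (exp (r / real n) - 1) \<le> exp r - 1"
proof -
  have "1 + real n * (exp (r / real n) - 1) \<le> (1 + (exp (r / real n) - 1)) ^ n"
    using assms by (intro Bernoulli_inequality) (simp add: add_increasing)
  also have "\<dots> = exp r" using assms by (simp add: exp_of_nat_mult[symmetric])
  finally show ?thesis by simp
qed

lemma tradeoff_at_optimal_tilt:
  fixes n :: nat and r \<alpha> :: real
  assumes n: "0 < n" and r: "0 < r" and \<alpha>: "0 < \<alpha>"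
  defines "t \<equiv> sqrt (2 * r / real n) / \<alpha>"
  shows "r / (t * real n) + (exp (\<alpha>\<^sup>2 * t\<^sup>2 / 2) - 1) / t
     \<le> 1 / sqrt (real n) * (\<alpha> * sqrt r / sqrt 2 + \<alpha> / sqrt (2 * r) * (exp r - 1))"
proof -
  define s q u where "s = sqrt (real n)" and "q = sqrt r" and "u = sqrt (2::real)"
  have s: "0 < s" "real n = s\<^sup>2" and q: "0 < q" "r = q\<^sup>2" and u: "0 < u" "u\<^sup>2 = 2"
    using n r by (simp_all add: s_def q_def u_def)
  have t: "t = u * q / (s * \<alpha>)"
    unfolding t_def s_def q_def u_def using n r by (simp add: real_sqrt_divide real_sqrt_mult)
  have "\<alpha>\<^sup>2 * t\<^sup>2 / 2 = r / real n"
    unfolding t using s q u \<alpha> by (simp add: power_divide power_mult_distrib)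
  moreover have "r / (t * real n) = 1 / sqrt (real n) * (\<alpha> * sqrt r / sqrt 2)"
    unfolding t s_def[symmetric] q_def[symmetric] u_def[symmetric]
    using s q u \<alpha> by (simp add: field_simps power2_eq_square)
  moreover have "(exp (r / real n) - 1) / t \<le> 1 / sqrt (real n) * (\<alpha> / sqrt (2 * r) * (exp r - 1))"
  proof -
    have "(exp (r / real n) - 1) / t = \<alpha> * (real n * (exp (r / real n) - 1)) / (u * q * s)"
      unfolding t using s q u \<alpha> by (simp add: field_simps power2_eq_square)
    also have "\<dots> \<le> \<alpha> * (exp r - 1) / (u * q * s)"
      using s q u \<alpha> mult_exp_divide_le[OF n, of r] r
      by (intro divide_right_mono mult_left_mono) auto
    also have "\<dots> = 1 / sqrt (real n) * (\<alpha> / sqrt (2 * r) * (exp r - 1))"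
      by (simp add: s_def q_def u_def real_sqrt_mult)
    finally show ?thesis .
  qed
  ultimately show ?thesis by (simp add: distrib_left)
qed

lemma AE_RN_deriv_pos:
  assumes "prob_space P" "prob_space Q" "sets Q = sets P" "absolutely_continuous P Q"
  shows "AE x in Q. 0 < enn2real (RN_deriv P Q x)"
proof -
  interpret P: prob_space P by fact
  interpret Q: prob_space Q by fact
  have "AE x in density P (RN_deriv P Q). 0 < enn2real (RN_deriv P Q x)"
    using P.RN_deriv_finite[OF Q.sigma_finite_measure_axioms assms(4,3)]
    by (subst AE_density) (auto elim!: AE_mp simp: enn2real_positive_iff less_top)
  then show ?thesis using P.density_RN_deriv[OF assms(4,3)] by metis
qed

lemma
  assumes "prob_space P" "prob_space Q" "sets Q = sets P" "absolutely_continuous P Q"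
    and F: "F \<in> borel_measurable P" and exp_F: "(\<integral>\<^sup>+x. ennreal (exp (F x)) \<partial>P) \<le> 1"
  shows integrable_exp_divide_RN_deriv: "integrable Q (\<lambda>x. exp (F x) / enn2real (RN_deriv P Q x))"
    and integral_exp_divide_RN_deriv_le_1: "(\<integral>x. exp (F x) / enn2real (RN_deriv P Q x) \<partial>Q) \<le> 1"
proof -
  interpret P: prob_space P by fact
  define K where "K x = exp (F x) / enn2real (RN_deriv P Q x)" for x
  have K_meas: "K \<in> borel_measurable Q"
    unfolding measurable_cong_sets[OF assms(3) refl] K_def[abs_def] using F by measurable
  have "(\<integral>\<^sup>+x. ennreal (K x) \<partial>Q) = (\<integral>\<^sup>+x. RN_deriv P Q x * ennreal (K x) \<partial>P)"
    using assms K_meas by (subst (1) P.density_RN_deriv[symmetric]) (auto simp: nn_integral_density)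
  also have "\<dots> \<le> (\<integral>\<^sup>+x. ennreal (exp (F x)) \<partial>P)"
  proof (rule nn_integral_mono)
    fix x
    show "RN_deriv P Q x * ennreal (K x) \<le> ennreal (exp (F x))"
      by (cases "RN_deriv P Q x") (auto simp: K_def ennreal_mult[symmetric])
  qed
  finally have nn_K: "(\<integral>\<^sup>+x. ennreal (K x) \<partial>Q) \<le> 1" using exp_F by simp
  show "integrable Q (\<lambda>x. exp (F x) / enn2real (RN_deriv P Q x))"
    using K_meas nn_K unfolding K_def[abs_def]
    by (intro integrableI_nonneg) (auto simp: top_unique intro: le_less_trans[of _ 1])
  show "(\<integral>x. exp (F x) / enn2real (RN_deriv P Q x) \<partial>Q) \<le> 1"
    using K_meas nn_K unfolding K_def[abs_def]
    by (subst integral_eq_nn_integral) (auto simp: enn2real_leI)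
qed

text \<open>Change of measure in Gibbs form: with \<open>K = exp F / (dQ/dP)\<close>, the pointwise bound
  \<open>ln K \<le> K - 1\<close> reads \<open>F \<le> ln (dQ/dP) + K - 1\<close>, and \<open>\<integral>K dQ \<le> \<integral>exp F dP \<le> 1\<close>.
  The lower bound \<open>-G\<close> on \<open>F\<close> only serves to make \<open>F\<close> integrable.\<close>

lemma integral_le_KL_nats:
  fixes F G :: "'a \<Rightarrow> real"
  assumes P: "prob_space P" and Q: "prob_space Q" and KL: "KL_nats P Q < \<infinity>"
    and F[measurable]: "F \<in> borel_measurable P" and G: "integrable Q G"
    and FG: "\<And>x. x \<in> space P \<Longrightarrow> 0 \<le> F x + G x"
    and exp_F: "(\<integral>\<^sup>+x. ennreal (exp (F x)) \<partial>P) \<le> 1"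
  shows "integrable Q F \<and> ereal (\<integral>x. F x \<partial>Q) \<le> KL_nats P Q"
proof -
  interpret Q: prob_space Q by fact
  from KL have sets_eq: "sets Q = sets P" and ac: "absolutely_continuous P Q"
    and int_ed: "integrable Q (entropy_density (exp 1) P Q)"
    and KL_eq: "KL_nats P Q = ereal (KL_divergence (exp 1) P Q)"
    by (auto simp: KL_nats_def split: if_splits)
  define \<rho> where "\<rho> x = enn2real (RN_deriv P Q x)" for x
  define K where "K x = exp (F x) / \<rho> x" for x
  have ed_eq: "entropy_density (exp 1) P Q = (\<lambda>x. ln (\<rho> x))"
    by (simp add: entropy_density_def \<rho>_def comp_def log_def fun_eq_iff)
  have int_ln: "integrable Q (\<lambda>x. ln (\<rho> x))" using int_ed ed_eq by simp
  have int_K: "integrable Q K" and K_le: "(\<integral>x. K x \<partial>Q) \<le> 1"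
    using integrable_exp_divide_RN_deriv[OF P Q sets_eq ac F exp_F]
      integral_exp_divide_RN_deriv_le_1[OF P Q sets_eq ac F exp_F]
    by (simp_all add: K_def[abs_def] \<rho>_def)
  have F_le: "AE x in Q. F x \<le> ln (\<rho> x) + K x - 1"
    using AE_RN_deriv_pos[OF P Q sets_eq ac]
  proof (rule AE_mp, intro AE_I2 impI)
    fix x assume "0 < enn2real (RN_deriv P Q x)"
    then have "0 < \<rho> x" by (simp add: \<rho>_def)
    then have "ln (K x) \<le> K x - 1" by (intro ln_le_minus_one) (simp add: K_def)
    moreover have "ln (K x) = F x - ln (\<rho> x)" using \<open>0 < \<rho> x\<close> by (simp add: K_def ln_div)
    ultimately show "F x \<le> ln (\<rho> x) + K x - 1" by simp
  qed
  have "integrable Q (\<lambda>x. F x + G x)"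
  proof (rule Bochner_Integration.integrable_bound)
    show "integrable Q (\<lambda>x. G x + (ln (\<rho> x) + K x - 1))" using G int_ln int_K by auto
    have "F \<in> borel_measurable Q" using F measurable_cong_sets[OF sets_eq refl] by blast
    then show "(\<lambda>x. F x + G x) \<in> borel_measurable Q" using borel_measurable_integrable[OF G] by measurable
    show "AE x in Q. norm (F x + G x) \<le> norm (G x + (ln (\<rho> x) + K x - 1))"
      using F_le by (rule AE_mp) (auto intro!: AE_I2 simp: sets_eq_imp_space_eq[OF sets_eq] dest!: FG)
  qed
  from Bochner_Integration.integrable_diff[OF this G] have int_F: "integrable Q F" by simp
  have "(\<integral>x. F x \<partial>Q) \<le> (\<integral>x. ln (\<rho> x) + K x - 1 \<partial>Q)"
    using int_F int_ln int_K F_le by (intro integral_mono_AE) auto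
  also have "\<dots> = KL_divergence (exp 1) P Q + (\<integral>x. K x \<partial>Q) - 1"
    using int_ln int_K by (simp add: KL_divergence_def ed_eq Q.prob_space)
  finally show ?thesis using int_F K_le KL_eq by simp
qed

lemma prob_space_sample_space: "prob_space \<mu> \<Longrightarrow> prob_space (sample_space n \<mu>)"
  by (rule prob_space_PiM)

lemma sets_sample_space_cong: "sets \<mu> = sets M \<Longrightarrow> sets (sample_space n \<mu>) = sets (sample_space n M)"
  by (rule sets_PiM_cong) simp_all

lemma KL_nats_self:
  assumes "prob_space P"
  shows "KL_nats P P = 0"
proof -
  interpret P: prob_space P by fact
  have "AE x in P. 1 = RN_deriv P P x"
    by (rule P.RN_deriv_unique) (auto simp: density_1)
  then have "AE x in P. 0 = entropy_density (exp 1) P P x"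
    by (elim AE_mp) (simp add: entropy_density_def)
  then have "integrable P (entropy_density (exp 1) P P)"
    by (rule integrable_cong_AE_imp[rotated 2]) simp_all
  then show ?thesis
    by (simp add: KL_nats_def absolutely_continuous_def P.KL_same_eq_0)
qed

lemma (in prob_space) distr_pair_snd:
  assumes "sigma_finite_measure N"
  shows "distr (M \<Otimes>\<^sub>M N) N snd = N"
proof -
  interpret N: sigma_finite_measure N by fact
  interpret pair_sigma_finite M N ..
  have "distr (M \<Otimes>\<^sub>M N) N snd = distr (distr (N \<Otimes>\<^sub>M M) (M \<Otimes>\<^sub>M N) (\<lambda>(x, y). (y, x))) N snd"
    by (subst distr_pair_swap) (rule refl)
  also have "\<dots> = distr (N \<Otimes>\<^sub>M M) N fst"
    by (subst distr_distr) (simp_all add: comp_def case_prod_beta)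
  also have "\<dots> = N" by (rule distr_pair_fst)
  finally show ?thesis .
qed

lemma pair_measure_in_couplings:
  assumes \<nu>: "prob_space \<nu>" "sets \<nu> = sets MW" and \<mu>': "prob_space \<mu>'" "sets \<mu>' = sets MZ"
  shows "\<nu> \<Otimes>\<^sub>M sample_space n \<mu>' \<in> couplings MW MZ n \<nu> \<mu>'"
proof -
  let ?Q = "sample_space n \<mu>'"
  interpret \<nu>: prob_space \<nu> by fact
  interpret Q: prob_space ?Q using \<mu>'(1) by (rule prob_space_sample_space)
  interpret pair_prob_space \<nu> ?Q ..
  have sets_Q: "sets ?Q = sets (sample_space n MZ)" using \<mu>'(2) by (rule sets_sample_space_cong)
  have "distr (\<nu> \<Otimes>\<^sub>M ?Q) MW fst = \<nu>"
    using \<nu>(2) Q.distr_pair_fst by (subst distr_cong[OF refl \<nu>(2)[symmetric]]) simp_all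
  moreover have "distr (\<nu> \<Otimes>\<^sub>M ?Q) (sample_space n MZ) snd = ?Q"
    using sets_Q \<nu>.distr_pair_snd[OF Q.sigma_finite_measure_axioms]
    by (subst distr_cong[OF refl sets_Q[symmetric]]) simp_all
  ultimately show ?thesis
    using prob_space_axioms sets_pair_measure_cong[OF \<nu>(2) sets_Q] by (simp add: couplings_def)
qed

lemma
  fixes f :: "'w \<Rightarrow> real"
  assumes \<pi>: "\<pi> \<in> couplings MW MZ n \<nu> \<mu>'" and f: "f \<in> borel_measurable MW"
  shows integrable_coupling_fst_iff: "integrable \<pi> (\<lambda>p. f (fst p)) \<longleftrightarrow> integrable \<nu> f"
    and integral_coupling_fst: "(\<integral>p. f (fst p) \<partial>\<pi>) = (\<integral>w. f w \<partial>\<nu>)"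
proof -
  have sets_\<pi>: "sets \<pi> = sets (MW \<Otimes>\<^sub>M sample_space n MZ)" and distr_fst: "distr \<pi> MW fst = \<nu>"
    using \<pi> by (auto simp: couplings_def)
  have fst: "fst \<in> \<pi> \<rightarrow>\<^sub>M MW" by (simp add: measurable_cong_sets[OF sets_\<pi> refl])
  show "integrable \<pi> (\<lambda>p. f (fst p)) \<longleftrightarrow> integrable \<nu> f"
    using integrable_distr_eq[OF fst f] distr_fst by simp
  show "(\<integral>p. f (fst p) \<partial>\<pi>) = (\<integral>w. f w \<partial>\<nu>)"
    using integral_distr[OF fst f] distr_fst by simp
qed

lemma
  fixes f :: "'z \<Rightarrow> real"
  assumes \<pi>: "\<pi> \<in> couplings MW MZ n \<nu> \<mu>'" and \<mu>': "prob_space \<mu>'" "sets \<mu>' = sets MZ"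
    and i: "i < n" and f: "f \<in> borel_measurable MZ"
  shows integrable_coupling_component_iff: "integrable \<pi> (\<lambda>p. f (snd p i)) \<longleftrightarrow> integrable \<mu>' f"
    and integral_coupling_component: "(\<integral>p. f (snd p i) \<partial>\<pi>) = (\<integral>z. f z \<partial>\<mu>')"
proof -
  have sets_\<pi>: "sets \<pi> = sets (MW \<Otimes>\<^sub>M sample_space n MZ)"
    and distr_snd: "distr \<pi> (sample_space n MZ) snd = sample_space n \<mu>'"
    using \<pi> by (auto simp: couplings_def)
  have snd: "snd \<in> \<pi> \<rightarrow>\<^sub>M sample_space n MZ" by (simp add: measurable_cong_sets[OF sets_\<pi> refl])
  have component: "(\<lambda>s. s i) \<in> sample_space n MZ \<rightarrow>\<^sub>M MZ" using i by simp
  have "distr \<pi> MZ (\<lambda>p. snd p i) = distr (sample_space n \<mu>') MZ (\<lambda>s. s i)"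
    using distr_distr[OF component snd] distr_snd by (simp add: comp_def)
  also have "\<dots> = distr (sample_space n \<mu>') \<mu>' (\<lambda>s. s i)"
    using \<mu>'(2) by (intro distr_cong) simp_all
  also have "\<dots> = \<mu>'" using \<mu>'(1) i by (intro distr_PiM_component) auto
  finally have distr_i: "distr \<pi> MZ (\<lambda>p. snd p i) = \<mu>'" .
  have meas_i: "(\<lambda>p. snd p i) \<in> \<pi> \<rightarrow>\<^sub>M MZ" using measurable_comp[OF snd component] by (simp add: comp_def)
  show "integrable \<pi> (\<lambda>p. f (snd p i)) \<longleftrightarrow> integrable \<mu>' f"
    using integrable_distr_eq[OF meas_i f] distr_i by simp
  show "(\<integral>p. f (snd p i) \<partial>\<pi>) = (\<integral>z. f z \<partial>\<mu>')"
    using integral_distr[OF meas_i f] distr_i by simp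
qed

lemma
  assumes "prob_space M" "sets M = sets MW" "s \<in> space S"
  shows prob_space_bind_return_Pair: "prob_space (M \<bind> (\<lambda>w. return (MW \<Otimes>\<^sub>M S) (w, s)))"
    and distr_snd_bind_return_Pair: "distr (M \<bind> (\<lambda>w. return (MW \<Otimes>\<^sub>M S) (w, s))) S snd = return S s"
proof -
  interpret M: prob_space M by fact
  have Pair_s: "(\<lambda>w. (w, s)) \<in> M \<rightarrow>\<^sub>M MW \<Otimes>\<^sub>M S"
    using assms(3) by (simp add: measurable_cong_sets[OF assms(2) refl])
  then have eq: "M \<bind> (\<lambda>w. return (MW \<Otimes>\<^sub>M S) (w, s)) = distr M (MW \<Otimes>\<^sub>M S) (\<lambda>w. (w, s))"
    by (rule bind_return_distr'[OF M.not_empty])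
  show "prob_space (M \<bind> (\<lambda>w. return (MW \<Otimes>\<^sub>M S) (w, s)))"
    unfolding eq by (rule M.prob_space_distr[OF Pair_s])
  show "distr (M \<bind> (\<lambda>w. return (MW \<Otimes>\<^sub>M S) (w, s))) S snd = return S s"
    unfolding eq using Pair_s assms(3) by (subst distr_distr) (simp_all add: comp_def)
qed

lemma joint_law_in_couplings:
  assumes \<mu>': "prob_space \<mu>'" "sets \<mu>' = sets MZ"
    and A: "A \<in> sample_space n MZ \<rightarrow>\<^sub>M subprob_algebra MW"
    and A_prob: "\<forall>s\<in>space (sample_space n MZ). prob_space (A s)"
    and distr_fst: "distr (joint_law MW MZ n \<mu>' A) MW fst = \<nu>"
  shows "joint_law MW MZ n \<mu>' A \<in> couplings MW MZ n \<nu> \<mu>'"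
proof -
  define N where "N = MW \<Otimes>\<^sub>M sample_space n MZ"
  define Q where "Q = sample_space n \<mu>'"
  define K where "K s = A s \<bind> (\<lambda>w. return N (w, s))" for s
  interpret Q: prob_space Q unfolding Q_def by (rule prob_space_sample_space[OF \<mu>'(1)])
  have sets_Q: "sets Q = sets (sample_space n MZ)"
    unfolding Q_def by (rule sets_sample_space_cong[OF \<mu>'(2)])
  have space_Q: "space Q = space (sample_space n MZ)" using sets_Q by (rule sets_eq_imp_space_eq)
  have A_Q: "A \<in> Q \<rightarrow>\<^sub>M subprob_algebra MW" using A by (simp add: measurable_cong_sets[OF sets_Q refl])
  have K_meas: "K \<in> Q \<rightarrow>\<^sub>M subprob_algebra N"
  proof -
    have "(\<lambda>x. (snd x, fst x)) \<in> Q \<Otimes>\<^sub>M MW \<rightarrow>\<^sub>M N"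
      unfolding N_def by (simp add: measurable_cong_sets[OF sets_pair_measure_cong[OF sets_Q refl] refl])
    then have "(\<lambda>x. return N (snd x, fst x)) \<in> Q \<Otimes>\<^sub>M MW \<rightarrow>\<^sub>M subprob_algebra N"
      by (rule measurable_compose[OF _ return_measurable])
    with A_Q show ?thesis unfolding K_def[abs_def] by (rule measurable_bind)
  qed
  have K_prob: "prob_space (K s)"
    and K_snd: "distr (K s) (sample_space n MZ) snd = return (sample_space n MZ) s"
    if s: "s \<in> space Q" for s
    using A_prob subprob_measurableD(2)[OF A_Q s] s space_Q
    by (simp_all add: K_def N_def prob_space_bind_return_Pair distr_snd_bind_return_Pair)
  have joint_eq: "joint_law MW MZ n \<mu>' A = Q \<bind> K"
    by (simp add: joint_law_def Q_def K_def[abs_def] N_def)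
  have "distr (Q \<bind> K) (sample_space n MZ) snd = Q \<bind> (\<lambda>s. distr (K s) (sample_space n MZ) snd)"
    by (rule distr_bind[OF K_meas Q.not_empty]) (simp add: N_def)
  also have "\<dots> = Q \<bind> return (sample_space n MZ)"
    by (rule bind_cong[OF refl K_snd])
  also have "\<dots> = Q" by (rule bind_return''[OF sets_Q])
  finally have "distr (Q \<bind> K) (sample_space n MZ) snd = Q" .
  moreover have "prob_space (Q \<bind> K)" by (rule Q.prob_space_bind[OF _ K_meas]) (auto intro: K_prob)
  moreover have "sets (Q \<bind> K) = sets N"
    by (rule sets_bind) (auto simp: sets_kernel[OF K_meas] Q.not_empty)
  ultimately show ?thesis
    using distr_fst unfolding couplings_def joint_eq by (simp add: N_def Q_def)
qed

lemma D3_antimono: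
  assumes "r \<le> r'"
  shows "D3 MW MZ n loss \<mu> \<mu>' r' \<nu> \<le> D3 MW MZ n loss \<mu> \<mu>' r \<nu>"
  unfolding D3_def using assms by (intro INF_superset_mono) (auto intro: order_trans)

locale subgaussian_loss =
  fixes MW :: "'w measure" and MZ :: "'z measure" and n :: nat
    and loss :: "'w \<Rightarrow> 'z \<Rightarrow> real" and \<mu> \<mu>' \<nu> :: "_ measure" and \<alpha> :: real
  assumes n_pos: "0 < n"
    and loss_meas: "(\<lambda>(w, z). loss w z) \<in> borel_measurable (MW \<Otimes>\<^sub>M MZ)"
    and loss_nonneg: "\<And>w z. w \<in> space MW \<Longrightarrow> z \<in> space MZ \<Longrightarrow> 0 \<le> loss w z"
    and \<mu>: "prob_space \<mu>" "sets \<mu> = sets MZ"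
    and \<mu>': "prob_space \<mu>'" "sets \<mu>' = sets MZ"
    and \<nu>: "prob_space \<nu>" "sets \<nu> = sets MW"
    and int_\<mu>: "integrable (\<nu> \<Otimes>\<^sub>M \<mu>) (\<lambda>(w, z). loss w z)"
    and int_\<mu>': "integrable (\<nu> \<Otimes>\<^sub>M \<mu>') (\<lambda>(w, z). loss w z)"
    and \<alpha>_nonneg: "0 \<le> \<alpha>"
    and subg: "\<And>z. z \<in> space MZ \<Longrightarrow> subgaussian \<nu> (\<lambda>w. loss w z) \<alpha>"
begin

lemma space_\<nu>: "space \<nu> = space MW" and space_\<mu>': "space \<mu>' = space MZ"
  using \<nu>(2) \<mu>'(2) by (metis sets_eq_imp_space_eq)+

lemma pair_\<nu>_\<mu>: "pair_prob_space \<nu> \<mu>" and pair_\<nu>_\<mu>': "pair_prob_space \<nu> \<mu>'"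
  using \<nu>(1) \<mu>(1) \<mu>'(1)
  by (simp_all add: pair_prob_space_def pair_sigma_finite_def prob_space_imp_sigma_finite)

lemma pair_\<nu>_sample: "pair_prob_space \<nu> (sample_space n \<mu>')"
  using \<nu>(1) prob_space_sample_space[OF \<mu>'(1)]
  by (simp add: pair_prob_space_def pair_sigma_finite_def prob_space_imp_sigma_finite)

lemma measurable_loss_comp:
  assumes "f \<in> M \<rightarrow>\<^sub>M MW" "g \<in> M \<rightarrow>\<^sub>M MZ"
  shows "(\<lambda>x. loss (f x) (g x)) \<in> borel_measurable M"
  using measurable_compose[OF measurable_Pair[OF assms] loss_meas] by simp

lemma
  shows integrable_pop_risk: "integrable \<nu> (pop_risk loss \<mu>)"
    and integrable_pop_risk': "integrable \<nu> (pop_risk loss \<mu>')"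
  using pair_sigma_finite.integrable_fst[OF pair_prob_space.axioms(1)[OF pair_\<nu>_\<mu>] int_\<mu>]
    pair_sigma_finite.integrable_fst[OF pair_prob_space.axioms(1)[OF pair_\<nu>_\<mu>'] int_\<mu>']
  by (simp_all add: pop_risk_def[abs_def])

lemma borel_measurable_pop_risk: "pop_risk loss \<mu> \<in> borel_measurable MW"
  using borel_measurable_integrable[OF integrable_pop_risk]
  by (simp add: measurable_cong_sets[OF \<nu>(2) refl])

definition mean_loss :: "'z \<Rightarrow> real" where
  "mean_loss z = (\<integral>w. loss w z \<partial>\<nu>)"

lemma borel_measurable_mean_loss[measurable]: "mean_loss \<in> borel_measurable MZ"
proof -
  interpret \<nu>: prob_space \<nu> by (rule \<nu>(1))
  have "(\<lambda>(z, w). loss w z) \<in> borel_measurable (MZ \<Otimes>\<^sub>M \<nu>)"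
    using measurable_loss_comp[of snd "MZ \<Otimes>\<^sub>M MW" fst]
    by (simp add: case_prod_beta' measurable_cong_sets[OF sets_pair_measure_cong[OF refl \<nu>(2)] refl])
  from \<nu>.borel_measurable_lebesgue_integral[OF this] show ?thesis
    by (simp add: mean_loss_def[abs_def])
qed

lemma integrable_mean_loss: "integrable \<mu>' mean_loss"
  using pair_sigma_finite.integrable_snd[OF pair_prob_space.axioms(1)[OF pair_\<nu>_\<mu>'] int_\<mu>']
  by (simp add: mean_loss_def[abs_def])

lemma integral_mean_loss: "(\<integral>z. mean_loss z \<partial>\<mu>') = (\<integral>w. pop_risk loss \<mu>' w \<partial>\<nu>)"
proof -
  interpret pair_prob_space \<nu> \<mu>' by (rule pair_\<nu>_\<mu>')
  show ?thesis
    using integral_snd[OF int_\<mu>'] integral_fst[OF int_\<mu>']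
    by (simp add: mean_loss_def pop_risk_def)
qed

definition loss_mgf :: "real \<Rightarrow> 'w \<Rightarrow> ennreal" where
  "loss_mgf t w = (\<integral>\<^sup>+z. ennreal (exp (t * (loss w z - mean_loss z))) \<partial>\<mu>')"

lemma borel_measurable_exp_centered_loss:
  "(\<lambda>(w, z). ennreal (exp (t * (loss w z - mean_loss z)))) \<in> borel_measurable (MW \<Otimes>\<^sub>M MZ)"
  using measurable_loss_comp[of fst "MW \<Otimes>\<^sub>M MZ" snd] by (simp add: case_prod_beta')

lemma borel_measurable_loss_mgf: "loss_mgf t \<in> borel_measurable MW"
proof -
  have "(\<lambda>(w, z). ennreal (exp (t * (loss w z - mean_loss z)))) \<in> borel_measurable (MW \<Otimes>\<^sub>M \<mu>')"
    using borel_measurable_exp_centered_loss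
    by (simp add: measurable_cong_sets[OF sets_pair_measure_cong[OF refl \<mu>'(2)] refl])
  from sigma_finite_measure.borel_measurable_nn_integral[OF prob_space_imp_sigma_finite[OF \<mu>'(1)] this]
  show ?thesis by (simp add: loss_mgf_def[abs_def])
qed

lemma nn_integral_loss_mgf_le: "(\<integral>\<^sup>+w. loss_mgf t w \<partial>\<nu>) \<le> ennreal (exp (\<alpha>\<^sup>2 * t\<^sup>2 / 2))"
proof -
  interpret pair_prob_space \<nu> \<mu>' by (rule pair_\<nu>_\<mu>')
  have "(\<integral>\<^sup>+w. loss_mgf t w \<partial>\<nu>)
      = (\<integral>\<^sup>+z. (\<integral>\<^sup>+w. ennreal (exp (t * (loss w z - mean_loss z))) \<partial>\<nu>) \<partial>\<mu>')"
    using Fubini'[OF borel_measurable_exp_centered_loss[of t, unfolded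
          measurable_cong_sets[OF sets_pair_measure_cong[OF \<nu>(2) \<mu>'(2), symmetric] refl]]]
    by (simp add: loss_mgf_def)
  also have "\<dots> \<le> (\<integral>\<^sup>+z. ennreal (exp (\<alpha>\<^sup>2 * t\<^sup>2 / 2)) \<partial>\<mu>')"
    using subg by (intro nn_integral_mono) (auto simp: subgaussian_def mean_loss_def space_\<mu>')
  also have "\<dots> = ennreal (exp (\<alpha>\<^sup>2 * t\<^sup>2 / 2))" by (simp add: M2.emeasure_space_1)
  finally show ?thesis .
qed

lemma AE_loss_mgf_finite: "AE w in \<nu>. loss_mgf t w \<noteq> \<infinity>"
  using borel_measurable_loss_mgf nn_integral_loss_mgf_le[of t]
  by (intro nn_integral_PInf_AE) (auto simp: measurable_cong_sets[OF \<nu>(2) refl] top_unique)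

text \<open>\<open>enn2real\<close> sends \<open>\<infinity>\<close> to \<open>0\<close>; by \<open>AE_loss_mgf_finite\<close> this happens only on a \<open>\<nu>\<close>-null set.\<close>

definition loss_mgf_real :: "real \<Rightarrow> 'w \<Rightarrow> real" where
  "loss_mgf_real t w = enn2real (loss_mgf t w)"

lemma borel_measurable_loss_mgf_real[measurable]: "loss_mgf_real t \<in> borel_measurable MW"
  using borel_measurable_loss_mgf unfolding loss_mgf_real_def[abs_def] by measurable

lemma
  shows integrable_loss_mgf_real: "integrable \<nu> (loss_mgf_real t)"
    and integral_loss_mgf_real_le: "(\<integral>w. loss_mgf_real t w \<partial>\<nu>) \<le> exp (\<alpha>\<^sup>2 * t\<^sup>2 / 2)"
proof -
  have meas: "loss_mgf_real t \<in> borel_measurable \<nu>"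
    by (simp add: measurable_cong_sets[OF \<nu>(2) refl])
  have le: "(\<integral>\<^sup>+w. ennreal (loss_mgf_real t w) \<partial>\<nu>) \<le> ennreal (exp (\<alpha>\<^sup>2 * t\<^sup>2 / 2))"
    by (rule order_trans[OF nn_integral_mono nn_integral_loss_mgf_le])
      (simp add: loss_mgf_real_def ennreal_enn2real_if)
  show "integrable \<nu> (loss_mgf_real t)"
    by (rule integrableI_nonneg[OF meas])
      (use le in \<open>auto simp: loss_mgf_real_def intro: le_less_trans\<close>)
  show "(\<integral>w. loss_mgf_real t w \<partial>\<nu>) \<le> exp (\<alpha>\<^sup>2 * t\<^sup>2 / 2)"
    using le by (subst integral_eq_nn_integral[OF meas]) (auto simp: loss_mgf_real_def enn2real_leI)
qed

definition total_loss :: "'w \<times> (nat \<Rightarrow> 'z) \<Rightarrow> real" where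
  "total_loss p = (\<Sum>i<n. loss (fst p) (snd p i))"

definition dv_test_function :: "real \<Rightarrow> 'w \<times> (nat \<Rightarrow> 'z) \<Rightarrow> real" where
  "dv_test_function t p =
     t * (\<Sum>i<n. loss (fst p) (snd p i) - mean_loss (snd p i)) - real n * (loss_mgf_real t (fst p) - 1)"

lemma borel_measurable_dv_test_function:
  "dv_test_function t \<in> borel_measurable (MW \<Otimes>\<^sub>M sample_space n MZ)"
proof -
  have "(\<lambda>p. loss (fst p) (snd p i)) \<in> borel_measurable (MW \<Otimes>\<^sub>M sample_space n MZ)" if "i < n" for i
    using that by (intro measurable_loss_comp) simp_all
  then show ?thesis unfolding dv_test_function_def[abs_def] by measurable
qed

lemma nn_integral_exp_dv_test_function_section:
  assumes w: "w \<in> space MW"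
  shows "(\<integral>\<^sup>+s. ennreal (exp (dv_test_function t (w, s))) \<partial>sample_space n \<mu>')
    = ennreal (exp (- (real n * (loss_mgf_real t w - 1)))) * loss_mgf t w ^ n"
proof -
  interpret product_sigma_finite "\<lambda>_. \<mu>'"
    by (simp add: product_sigma_finite_def prob_space_imp_sigma_finite[OF \<mu>'(1)])
  have factor_meas: "(\<lambda>z. ennreal (exp (t * (loss w z - mean_loss z)))) \<in> borel_measurable \<mu>'"
    using measurable_loss_comp[of "\<lambda>_. w" MZ "\<lambda>z. z"] w
    by (simp add: measurable_cong_sets[OF \<mu>'(2) refl])
  have "ennreal (exp (dv_test_function t (w, s))) = ennreal (exp (- (real n * (loss_mgf_real t w - 1)))) *
      (\<Prod>i<n. ennreal (exp (t * (loss w (s i) - mean_loss (s i)))))" for s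
    by (simp add: dv_test_function_def sum_distrib_left exp_sum[symmetric] exp_add[symmetric]
        exp_diff prod_ennreal ennreal_mult[symmetric] prod_nonneg)
  then have "(\<integral>\<^sup>+s. ennreal (exp (dv_test_function t (w, s))) \<partial>sample_space n \<mu>')
      = ennreal (exp (- (real n * (loss_mgf_real t w - 1)))) *
        (\<integral>\<^sup>+s. (\<Prod>i<n. ennreal (exp (t * (loss w (s i) - mean_loss (s i))))) \<partial>sample_space n \<mu>')"
    using factor_meas by (simp add: nn_integral_cmult)
  also have "(\<integral>\<^sup>+s. (\<Prod>i<n. ennreal (exp (t * (loss w (s i) - mean_loss (s i))))) \<partial>sample_space n \<mu>')
      = (\<Prod>i<n. loss_mgf t w)"
    unfolding loss_mgf_def by (rule product_nn_integral_prod) (use factor_meas in auto)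
  finally show ?thesis by simp
qed

lemma nn_integral_exp_dv_test_function_le_1:
  "(\<integral>\<^sup>+p. ennreal (exp (dv_test_function t p)) \<partial>(\<nu> \<Otimes>\<^sub>M sample_space n \<mu>')) \<le> 1"
proof -
  interpret pair_prob_space \<nu> "sample_space n \<mu>'" by (rule pair_\<nu>_sample)
  have "(\<integral>\<^sup>+p. ennreal (exp (dv_test_function t p)) \<partial>(\<nu> \<Otimes>\<^sub>M sample_space n \<mu>'))
      = (\<integral>\<^sup>+w. (\<integral>\<^sup>+s. ennreal (exp (dv_test_function t (w, s))) \<partial>sample_space n \<mu>') \<partial>\<nu>)"
    using borel_measurable_dv_test_function[of t]
    by (intro M2.nn_integral_fst[symmetric])
      (simp add: measurable_cong_sets[OF sets_pair_measure_cong[OF \<nu>(2) sets_sample_space_cong[OF \<mu>'(2)]] refl])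
  also have "\<dots> \<le> (\<integral>\<^sup>+w. 1 \<partial>\<nu>)"
  proof (rule nn_integral_mono_AE)
    show "AE w in \<nu>. (\<integral>\<^sup>+s. ennreal (exp (dv_test_function t (w, s))) \<partial>sample_space n \<mu>') \<le> 1"
      using AE_loss_mgf_finite[of t]
    proof (rule AE_mp, intro AE_I2 impI)
      fix w assume "w \<in> space \<nu>" and "loss_mgf t w \<noteq> \<infinity>"
      then have c_eq: "loss_mgf t w = ennreal (loss_mgf_real t w)" and "w \<in> space MW"
        by (simp_all add: loss_mgf_real_def ennreal_enn2real_if space_\<nu>)
      have c_nonneg: "0 \<le> loss_mgf_real t w" by (simp add: loss_mgf_real_def)
      with \<open>w \<in> space MW\<close> have "(\<integral>\<^sup>+s. ennreal (exp (dv_test_function t (w, s))) \<partial>sample_space n \<mu>')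
          = ennreal (loss_mgf_real t w ^ n * exp (- (real n * (loss_mgf_real t w - 1))))"
        by (simp add: nn_integral_exp_dv_test_function_section c_eq ennreal_power
            ennreal_mult[symmetric] mult.commute)
      then show "(\<integral>\<^sup>+s. ennreal (exp (dv_test_function t (w, s))) \<partial>sample_space n \<mu>') \<le> 1"
        using c_nonneg by (simp add: power_mult_exp_le_1 ennreal_le_1)
    qed
  qed
  also have "\<dots> = 1" by (simp add: M1.emeasure_space_1)
  finally show ?thesis .
qed

lemma integral_dv_test_function_le:
  assumes \<pi>: "\<pi> \<in> couplings MW MZ n \<nu> \<mu>'" and MI: "mutual_info \<nu> (sample_space n \<mu>') \<pi> \<le> ereal r"
    and t: "0 < t"
  shows "integrable \<pi> (dv_test_function t) \<and> (\<integral>p. dv_test_function t p \<partial>\<pi>) \<le> r"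
proof -
  let ?P = "\<nu> \<Otimes>\<^sub>M sample_space n \<mu>'"
  interpret P: pair_prob_space \<nu> "sample_space n \<mu>'" by (rule pair_\<nu>_sample)
  define G where "G p = t * (\<Sum>i<n. mean_loss (snd p i)) + real n * loss_mgf_real t (fst p)" for p
  have "integrable \<pi> G"
    using integrable_coupling_component_iff[OF \<pi> \<mu>' _ borel_measurable_mean_loss] integrable_mean_loss
      integrable_coupling_fst_iff[OF \<pi> borel_measurable_loss_mgf_real] integrable_loss_mgf_real
    unfolding G_def[abs_def] by (intro Bochner_Integration.integrable_add integrable_mult_right
        Bochner_Integration.integrable_sum) simp_all
  moreover have "0 \<le> dv_test_function t p + G p" if "p \<in> space ?P" for p
  proof -
    have "fst p \<in> space MW" "\<And>i. i < n \<Longrightarrow> snd p i \<in> space MZ"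
      using that space_\<mu>' by (auto simp: space_pair_measure space_\<nu> space_PiM)
    then have "0 \<le> total_loss p" unfolding total_loss_def by (auto intro!: sum_nonneg loss_nonneg)
    moreover have "dv_test_function t p + G p = t * total_loss p + real n"
      by (simp add: dv_test_function_def G_def total_loss_def sum_subtractf algebra_simps)
    ultimately show ?thesis using t by simp
  qed
  moreover have "dv_test_function t \<in> borel_measurable ?P"
    using borel_measurable_dv_test_function
    by (simp add: measurable_cong_sets[OF sets_pair_measure_cong[OF \<nu>(2) sets_sample_space_cong[OF \<mu>'(2)]] refl])
  moreover have "prob_space \<pi>" using \<pi> by (simp add: couplings_def)
  moreover have KL: "KL_nats ?P \<pi> \<le> ereal r" using MI by (simp add: mutual_info_def)
  then have "KL_nats ?P \<pi> < \<infinity>" using order.strict_trans1 by fastforce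
  ultimately have "integrable \<pi> (dv_test_function t) \<and> ereal (\<integral>p. dv_test_function t p \<partial>\<pi>) \<le> KL_nats ?P \<pi>"
    using nn_integral_exp_dv_test_function_le_1 by (intro integral_le_KL_nats[OF P.prob_space_axioms])
  with KL show ?thesis by (metis ereal_less_eq(3) order.trans)
qed

definition expected_gap :: "('w \<times> (nat \<Rightarrow> 'z)) measure \<Rightarrow> real" where
  "expected_gap \<pi> = (\<integral>p. pop_risk loss \<mu> (fst p) - emp_risk loss n (snd p) (fst p) \<partial>\<pi>)"

definition independent_gap :: real where
  "independent_gap = (\<integral>w. pop_risk loss \<mu> w - pop_risk loss \<mu>' w \<partial>\<nu>)"

definition information_penalty :: "real \<Rightarrow> real" where
  "information_penalty r = 1 / sqrt (real n) * (\<alpha> * sqrt r / sqrt 2 + \<alpha> / sqrt (2 * r) * (exp r - 1))"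

lemma integral_gap_eq:
  assumes \<pi>: "\<pi> \<in> couplings MW MZ n \<nu> \<mu>'" and int_total: "integrable \<pi> total_loss"
  shows "expected_gap \<pi> = (\<integral>w. pop_risk loss \<mu> w \<partial>\<nu>) - (\<integral>p. total_loss p \<partial>\<pi>) / real n"
proof -
  have "(\<lambda>p. emp_risk loss n (snd p) (fst p)) = (\<lambda>p. total_loss p / real n)"
    by (simp add: emp_risk_def total_loss_def fun_eq_iff)
  moreover have "integrable \<pi> (\<lambda>p. pop_risk loss \<mu> (fst p))"
    using integrable_coupling_fst_iff[OF \<pi> borel_measurable_pop_risk] integrable_pop_risk by simp
  ultimately show ?thesis
    using int_total integral_coupling_fst[OF \<pi> borel_measurable_pop_risk] by (simp add: expected_gap_def)
qed

lemma integral_total_loss_le: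
  assumes \<pi>: "\<pi> \<in> couplings MW MZ n \<nu> \<mu>'" and MI: "mutual_info \<nu> (sample_space n \<mu>') \<pi> \<le> ereal r"
    and t: "0 < t"
  shows "integrable \<pi> total_loss \<and> (\<integral>p. total_loss p \<partial>\<pi>)
    \<le> (r + t * real n * (\<integral>z. mean_loss z \<partial>\<mu>') + real n * (exp (\<alpha>\<^sup>2 * t\<^sup>2 / 2) - 1)) / t"
proof -
  interpret \<pi>: prob_space \<pi> using \<pi> by (simp add: couplings_def)
  define mean_sum where "mean_sum p = (\<Sum>i<n. mean_loss (snd p i))" for p :: "'w \<times> (nat \<Rightarrow> 'z)"
  have int_F: "integrable \<pi> (dv_test_function t)" and F_le: "(\<integral>p. dv_test_function t p \<partial>\<pi>) \<le> r"
    using integral_dv_test_function_le[OF \<pi> MI t] by auto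
  have int_mean: "integrable \<pi> (\<lambda>p. mean_loss (snd p i))" if "i < n" for i
    using integrable_coupling_component_iff[OF \<pi> \<mu>' that borel_measurable_mean_loss] integrable_mean_loss
    by simp
  then have int_mean_sum: "integrable \<pi> mean_sum"
    unfolding mean_sum_def[abs_def] by (intro Bochner_Integration.integrable_sum) simp
  have integral_mean_sum: "(\<integral>p. mean_sum p \<partial>\<pi>) = real n * (\<integral>z. mean_loss z \<partial>\<mu>')"
    using int_mean integral_coupling_component[OF \<pi> \<mu>' _ borel_measurable_mean_loss]
    by (simp add: mean_sum_def[abs_def] Bochner_Integration.integral_sum)
  have int_mgf: "integrable \<pi> (\<lambda>p. loss_mgf_real t (fst p))"
    using integrable_coupling_fst_iff[OF \<pi> borel_measurable_loss_mgf_real] integrable_loss_mgf_real by simp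
  have total_eq: "total_loss = (\<lambda>p. (dv_test_function t p + t * mean_sum p
      + real n * (loss_mgf_real t (fst p) - 1)) / t)"
    using t by (simp add: fun_eq_iff total_loss_def dv_test_function_def mean_sum_def sum_subtractf field_simps)
  have "integrable \<pi> total_loss"
    unfolding total_eq using int_F int_mean_sum int_mgf
    by (intro integrable_divide Bochner_Integration.integrable_add Bochner_Integration.integrable_diff
        integrable_mult_right) auto
  moreover have "(\<integral>p. total_loss p \<partial>\<pi>) = ((\<integral>p. dv_test_function t p \<partial>\<pi>) + t * real n * (\<integral>z. mean_loss z \<partial>\<mu>')
      + real n * ((\<integral>w. loss_mgf_real t w \<partial>\<nu>) - 1)) / t"
    unfolding total_eq using int_F int_mean_sum int_mgf
    by (simp add: integral_mean_sum integral_coupling_fst[OF \<pi> borel_measurable_loss_mgf_real] \<pi>.prob_space)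
  moreover have "\<dots> \<le> (r + t * real n * (\<integral>z. mean_loss z \<partial>\<mu>') + real n * (exp (\<alpha>\<^sup>2 * t\<^sup>2 / 2) - 1)) / t"
    using F_le integral_loss_mgf_real_le[of t] t
    by (intro divide_right_mono add_mono mult_left_mono) auto
  ultimately show ?thesis by simp
qed

lemma expected_gap_ge:
  assumes \<pi>: "\<pi> \<in> couplings MW MZ n \<nu> \<mu>'" and MI: "mutual_info \<nu> (sample_space n \<mu>') \<pi> \<le> ereal r"
    and t: "0 < t"
  shows "expected_gap \<pi> \<ge> independent_gap - r / (t * real n) - (exp (\<alpha>\<^sup>2 * t\<^sup>2 / 2) - 1) / t"
proof -
  define M where "M = (\<integral>z. mean_loss z \<partial>\<mu>')"
  have int_total: "integrable \<pi> total_loss"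
    and total_le: "(\<integral>p. total_loss p \<partial>\<pi>) \<le> (r + t * real n * M + real n * (exp (\<alpha>\<^sup>2 * t\<^sup>2 / 2) - 1)) / t"
    using integral_total_loss_le[OF \<pi> MI t] by (auto simp: M_def)
  have "(r + t * real n * M + real n * (exp (\<alpha>\<^sup>2 * t\<^sup>2 / 2) - 1)) / t
      = real n * (r / (t * real n) + M + (exp (\<alpha>\<^sup>2 * t\<^sup>2 / 2) - 1) / t)"
    using n_pos t by (simp add: field_simps)
  with total_le have "(\<integral>p. total_loss p \<partial>\<pi>) / real n \<le> r / (t * real n) + M + (exp (\<alpha>\<^sup>2 * t\<^sup>2 / 2) - 1) / t"
    using n_pos by (simp add: divide_le_eq mult.commute)
  moreover have "independent_gap = (\<integral>w. pop_risk loss \<mu> w \<partial>\<nu>) - M"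
    using integrable_pop_risk integrable_pop_risk' integral_mean_loss by (simp add: independent_gap_def M_def)
  ultimately show ?thesis
    unfolding integral_gap_eq[OF \<pi> int_total] by linarith
qed

lemma expected_gap_ge_optimized:
  assumes \<pi>: "\<pi> \<in> couplings MW MZ n \<nu> \<mu>'" and MI: "mutual_info \<nu> (sample_space n \<mu>') \<pi> \<le> ereal r"
    and r: "0 < r"
  shows "expected_gap \<pi> \<ge> independent_gap - information_penalty r"
proof (cases "\<alpha> = 0")
  case False
  with \<alpha>_nonneg have "0 < \<alpha>" by simp
  then have "0 < sqrt (2 * r / real n) / \<alpha>" using r n_pos by simp
  from expected_gap_ge[OF \<pi> MI this] show ?thesis
    using tradeoff_at_optimal_tilt[OF n_pos r \<open>0 < \<alpha>\<close>] unfolding information_penalty_def by linarith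
next
  case True
  have "independent_gap \<le> expected_gap \<pi> + \<epsilon>" if "0 < \<epsilon>" for \<epsilon>
  proof -
    have "0 < r / (real n * \<epsilon>)" and "r / (r / (real n * \<epsilon>) * real n) = \<epsilon>"
      using that r n_pos by simp_all
    with expected_gap_ge[OF \<pi> MI] show ?thesis using True by fastforce
  qed
  then show ?thesis unfolding information_penalty_def using True by (simp add: field_le_epsilon)
qed

lemma expected_gap_pair_measure: "expected_gap (\<nu> \<Otimes>\<^sub>M sample_space n \<mu>') = independent_gap"
proof -
  let ?P = "\<nu> \<Otimes>\<^sub>M sample_space n \<mu>'"
  interpret P: pair_prob_space \<nu> "sample_space n \<mu>'" by (rule pair_\<nu>_sample)
  interpret \<nu>\<mu>': pair_prob_space \<nu> \<mu>' by (rule pair_\<nu>_\<mu>')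
  have loss_i: "integrable ?P (\<lambda>p. loss (fst p) (snd p i))
      \<and> (\<integral>p. loss (fst p) (snd p i) \<partial>?P) = (\<integral>w. pop_risk loss \<mu>' w \<partial>\<nu>)" if i: "i < n" for i
  proof -
    have component: "(\<lambda>y. y i) \<in> sample_space n \<mu>' \<rightarrow>\<^sub>M \<mu>'" using i by simp
    have "distr (sample_space n \<mu>') \<mu>' (\<lambda>y. y i) = \<mu>'"
      using \<mu>'(1) i by (intro distr_PiM_component) auto
    moreover have "distr \<nu> \<nu> (\<lambda>x. x) \<Otimes>\<^sub>M distr (sample_space n \<mu>') \<mu>' (\<lambda>y. y i)
        = distr ?P (\<nu> \<Otimes>\<^sub>M \<mu>') (\<lambda>(x, y). (x, y i))"
      by (rule pair_measure_distr[OF measurable_ident_sets[OF refl] component])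
        (simp add: calculation prob_space_imp_sigma_finite[OF \<mu>'(1)])
    ultimately have distr_i: "distr ?P (\<nu> \<Otimes>\<^sub>M \<mu>') (\<lambda>(x, y). (x, y i)) = \<nu> \<Otimes>\<^sub>M \<mu>'" by simp
    have meas_i: "(\<lambda>(x, y). (x, y i)) \<in> ?P \<rightarrow>\<^sub>M \<nu> \<Otimes>\<^sub>M \<mu>'" using component by measurable
    have loss_meas': "(\<lambda>(w, z). loss w z) \<in> borel_measurable (\<nu> \<Otimes>\<^sub>M \<mu>')"
      using loss_meas by (simp add: measurable_cong_sets[OF sets_pair_measure_cong[OF \<nu>(2) \<mu>'(2)] refl])
    have "(\<lambda>p. (\<lambda>(w, z). loss w z) ((\<lambda>(x, y). (x, y i)) p)) = (\<lambda>p. loss (fst p) (snd p i))"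
      by (auto simp: split_beta)
    then show ?thesis
      using integrable_distr_eq[OF meas_i loss_meas'] integral_distr[OF meas_i loss_meas'] distr_i int_\<mu>'
        \<nu>\<mu>'.integral_fst[OF int_\<mu>']
      by (simp add: pop_risk_def)
  qed
  have "integrable ?P total_loss"
    using loss_i unfolding total_loss_def[abs_def] by (intro Bochner_Integration.integrable_sum) simp
  moreover have "(\<integral>p. total_loss p \<partial>?P) = real n * (\<integral>w. pop_risk loss \<mu>' w \<partial>\<nu>)"
    using loss_i by (simp add: total_loss_def[abs_def] Bochner_Integration.integral_sum)
  ultimately show ?thesis
    using integral_gap_eq[OF pair_measure_in_couplings[OF \<nu> \<mu>']] n_pos integrable_pop_risk integrable_pop_risk'
    by (simp add: independent_gap_def)
qed

lemma D3_eq_INF: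
  "D3 MW MZ n loss \<mu> \<mu>' r \<nu> = (INF \<pi> \<in> {\<pi> \<in> couplings MW MZ n \<nu> \<mu>'.
      mutual_info \<nu> (sample_space n \<mu>') \<pi> \<le> ereal r}. ereal (expected_gap \<pi>))"
  unfolding D3_def expected_gap_def ..

lemma D3_zero_le: "D3 MW MZ n loss \<mu> \<mu>' 0 \<nu> \<le> ereal independent_gap"
proof -
  interpret P: pair_prob_space \<nu> "sample_space n \<mu>'" by (rule pair_\<nu>_sample)
  have "mutual_info \<nu> (sample_space n \<mu>') (\<nu> \<Otimes>\<^sub>M sample_space n \<mu>') = 0"
    using KL_nats_self[OF P.prob_space_axioms] by (simp add: mutual_info_def)
  then show ?thesis
    unfolding D3_eq_INF using pair_measure_in_couplings[OF \<nu> \<mu>'] expected_gap_pair_measure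
    by (intro INF_lower2[of "\<nu> \<Otimes>\<^sub>M sample_space n \<mu>'"]) simp_all
qed

lemma D3_ge:
  assumes "0 < r"
  shows "ereal (independent_gap - information_penalty r) \<le> D3 MW MZ n loss \<mu> \<mu>' r \<nu>"
  unfolding D3_eq_INF using expected_gap_ge_optimized assms by (intro INF_greatest) simp

lemma D3_ge_D3_zero:
  assumes "0 < r"
  shows "D3 MW MZ n loss \<mu> \<mu>' 0 \<nu> - ereal (information_penalty r) \<le> D3 MW MZ n loss \<mu> \<mu>' r \<nu>"
proof -
  have "D3 MW MZ n loss \<mu> \<mu>' 0 \<nu> - ereal (information_penalty r) \<le> ereal (independent_gap - information_penalty r)"
    using D3_zero_le by (cases "D3 MW MZ n loss \<mu> \<mu>' 0 \<nu>") auto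
  also have "\<dots> \<le> D3 MW MZ n loss \<mu> \<mu>' r \<nu>" using D3_ge[OF assms] .
  finally show ?thesis .
qed

lemma gen_ge:
  assumes "A \<in> sample_space n MZ \<rightarrow>\<^sub>M subprob_algebra MW"
    and "\<forall>s \<in> space (sample_space n MZ). prob_space (A s)"
    and "distr (joint_law MW MZ n \<mu>' A) MW fst = \<nu>"
    and "mutual_info \<nu> (sample_space n \<mu>') (joint_law MW MZ n \<mu>' A) = ereal I" and "0 < I"
  shows "independent_gap - information_penalty I \<le> gen MW MZ n loss \<mu> \<mu>' A"
  using expected_gap_ge_optimized[OF joint_law_in_couplings[OF \<mu>' assms(1-3)]] assms(4,5)
  by (simp add: gen_def expected_gap_def)

end

theorem corollary2:
  fixes MW :: "'w measure" and MZ :: "'z measure" and n :: nat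
    and loss :: "'w \<Rightarrow> 'z \<Rightarrow> real" and \<mu> \<mu>' \<nu> :: "_ measure" and \<alpha> :: real
  assumes n_pos: "0 < n"
    and loss_meas: "(\<lambda>(w, z). loss w z) \<in> borel_measurable (MW \<Otimes>\<^sub>M MZ)"
    and loss_nonneg: "\<And>w z. w \<in> space MW \<Longrightarrow> z \<in> space MZ \<Longrightarrow> 0 \<le> loss w z"
    and \<mu>: "prob_space \<mu>" "sets \<mu> = sets MZ"
    and \<mu>': "prob_space \<mu>'" "sets \<mu>' = sets MZ"
    and \<nu>: "prob_space \<nu>" "sets \<nu> = sets MW"
    and int_\<mu>: "integrable (\<nu> \<Otimes>\<^sub>M \<mu>) (\<lambda>(w, z). loss w z)"
    and int_\<mu>': "integrable (\<nu> \<Otimes>\<^sub>M \<mu>') (\<lambda>(w, z). loss w z)"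
    and \<alpha>_nonneg: "0 \<le> \<alpha>"
    and subg: "\<And>z. z \<in> space MZ \<Longrightarrow> subgaussian \<nu> (\<lambda>w. loss w z) \<alpha>"
  shows
    "(\<forall>r>0. D3 MW MZ n loss \<mu> \<mu>' 0 \<nu> \<ge> D3 MW MZ n loss \<mu> \<mu>' r \<nu>
           \<and> D3 MW MZ n loss \<mu> \<mu>' r \<nu> \<ge> D3 MW MZ n loss \<mu> \<mu>' 0 \<nu>
               - ereal (1 / sqrt (real n) * (\<alpha> * sqrt r / sqrt 2 + \<alpha> / sqrt (2 * r) * (exp r - 1))))
     \<and> (\<forall>A I. A \<in> sample_space n MZ \<rightarrow>\<^sub>M subprob_algebra MW
           \<and> (\<forall>s \<in> space (sample_space n MZ). prob_space (A s))
           \<and> distr (joint_law MW MZ n \<mu>' A) MW fst = \<nu>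
           \<and> mutual_info \<nu> (sample_space n \<mu>') (joint_law MW MZ n \<mu>' A) = ereal I
           \<and> 0 < I
         \<longrightarrow> gen MW MZ n loss \<mu> \<mu>' A \<ge> (\<integral>w. pop_risk loss \<mu> w - pop_risk loss \<mu>' w \<partial>\<nu>)
               - 1 / sqrt (real n) * (\<alpha> * sqrt I / sqrt 2 + \<alpha> * (exp I - 1) / sqrt (2 * I)))"
proof -
  interpret subgaussian_loss MW MZ n loss \<mu> \<mu>' \<nu> \<alpha>
    by (rule subgaussian_loss.intro) (fact assms)+
  have "D3 MW MZ n loss \<mu> \<mu>' r \<nu> \<le> D3 MW MZ n loss \<mu> \<mu>' 0 \<nu>" if "0 < r" for r
    by (rule D3_antimono) (use that in simp)
  then show ?thesis
    using D3_ge_D3_zero gen_ge unfolding independent_gap_def information_penalty_def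
    by (auto simp: mult.commute)
qed

end
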